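(* Let $S$ and $T$ be sets with $|T|\leq|S|$, let $\Phi_S$ be the full set of transition functions on $S$, and let $\Phi'_T$ be any set of transition functions on $T$. Then the machine $S\times\Phi_S$ is $T\times\Phi'_T$-complete.
   Context: For a set $S$, a transition function on $S$ is a function $S\to S$; the full set $\Phi_S$ is the set of all such functions. A machine $S\times\Phi'_S$ is a pair of a set $S$ and a subset $\Phi'_S\subseteq\Phi_S$. Isomorphism: $S\times\Phi'_S$ and $T\times\Phi'_T$ are isomorphic iff $|S|=|T|$, $|\Phi'_S|=|\Phi'_T|$, and there exist bijections $g:S\to T$, $h:\Phi'_S\to\Phi'_T$ with $g(\varphi(s))=h(\varphi)(g(s))$ for all $s\in S$, $\varphi\in\Phi'_S$. Functional reduction: $S\times\Phi'_2$ is a functional reduction of $S\times\Phi'_1$ iff $\Phi'_2\subseteq\Phi'_1$. State reduction: $S'\times\Phi'_{S'}$ is a state reduction of $S\times\Phi'_S$ iff (1) $S'\subseteq S$; (2) every $\varphi'\in\Phi'_{S'}$ agrees on $S'$ with some $\varphi\in\Phi'_S$; (3) for every $\varphi\in\Phi'_S$ with $\varphi(S')\subseteq S'$ there is $\varphi'\in\Phi'_{S'}$ agreeing with $\varphi$ on $S'$. A machine $B$ is a sub-machine of $A$ iff $B$ is obtained from $A$ by a functional reduction followed by a state reduction. A machine $S\times\Phi'_S$ is $T\times\Phi'_T$-complete if some sub-machine of $S\times\Phi'_S$ is isomorphic to $T\times\Phi'_T$. *)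

theory Defs
  imports "HOL-Library.FuncSet"
begin

(* A transition function on S is a map S -> S, represented extensionally
   (value undefined outside S), so Phi_S = S \<rightarrow>\<^sub>E S. *)
definition full_transitions :: "'a set \<Rightarrow> ('a \<Rightarrow> 'a) set" where
  "full_transitions S = S \<rightarrow>\<^sub>E S"

definition is_machine :: "'a set \<Rightarrow> ('a \<Rightarrow> 'a) set \<Rightarrow> bool" where
  "is_machine S \<Phi> \<longleftrightarrow> \<Phi> \<subseteq> full_transitions S"

definition machine_iso ::
  "'a set \<Rightarrow> ('a \<Rightarrow> 'a) set \<Rightarrow> 'b set \<Rightarrow> ('b \<Rightarrow> 'b) set \<Rightarrow> bool" where
  "machine_iso S \<Phi>S T \<Phi>T \<longleftrightarrow>
     (\<exists>g h. bij_betw g S T \<and> bij_betw h \<Phi>S \<Phi>T \<and>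
            (\<forall>s\<in>S. \<forall>\<phi>\<in>\<Phi>S. g (\<phi> s) = h \<phi> (g s)))"

definition functional_reduction :: "('a \<Rightarrow> 'a) set \<Rightarrow> ('a \<Rightarrow> 'a) set \<Rightarrow> bool" where
  "functional_reduction \<Phi>1 \<Phi>2 \<longleftrightarrow> \<Phi>2 \<subseteq> \<Phi>1"

definition state_reduction ::
  "'a set \<Rightarrow> ('a \<Rightarrow> 'a) set \<Rightarrow> 'a set \<Rightarrow> ('a \<Rightarrow> 'a) set \<Rightarrow> bool" where
  "state_reduction S \<Phi> S' \<Phi>' \<longleftrightarrow>
     is_machine S' \<Phi>' \<and> S' \<subseteq> S \<and>
     (\<forall>\<phi>'\<in>\<Phi>'. \<exists>\<phi>\<in>\<Phi>. \<forall>s\<in>S'. \<phi>' s = \<phi> s) \<and>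
     (\<forall>\<phi>\<in>\<Phi>. \<phi> ` S' \<subseteq> S' \<longrightarrow> (\<exists>\<phi>'\<in>\<Phi>'. \<forall>s\<in>S'. \<phi>' s = \<phi> s))"

definition sub_machine ::
  "'a set \<Rightarrow> ('a \<Rightarrow> 'a) set \<Rightarrow> 'a set \<Rightarrow> ('a \<Rightarrow> 'a) set \<Rightarrow> bool" where
  "sub_machine S \<Phi> S' \<Phi>' \<longleftrightarrow>
     (\<exists>\<Phi>2. functional_reduction \<Phi> \<Phi>2 \<and> state_reduction S \<Phi>2 S' \<Phi>')"

definition machine_complete ::
  "'a set \<Rightarrow> ('a \<Rightarrow> 'a) set \<Rightarrow> 'b set \<Rightarrow> ('b \<Rightarrow> 'b) set \<Rightarrow> bool" where
  "machine_complete S \<Phi> T \<Phi>T \<longleftrightarrow>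
     (\<exists>S' \<Phi>'. sub_machine S \<Phi> S' \<Phi>' \<and> machine_iso S' \<Phi>' T \<Phi>T)"

end

theory Submission
  imports Defs
begin

(* Embed T into S and transport the given machine on T to its image S'.
   Extending each transported transition by the identity outside S' yields a
   set of full transitions on S whose state reduction to S' is exactly the
   transported machine, since each extended map leaves S' invariant and agrees
   there with the map it extends. *)

definition extend_by_id :: "'a set \<Rightarrow> 'a set \<Rightarrow> ('a \<Rightarrow> 'a) \<Rightarrow> 'a \<Rightarrow> 'a" where
  "extend_by_id S S' \<phi> = restrict (\<lambda>s. if s \<in> S' then \<phi> s else s) S"

lemma extend_by_id_in_full_transitions:
  assumes "S' \<subseteq> S" and "\<phi> \<in> full_transitions S'"
  shows "extend_by_id S S' \<phi> \<in> full_transitions S"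
  using assms by (auto simp: extend_by_id_def full_transitions_def PiE_iff)

lemma extend_by_id_agrees:
  assumes "S' \<subseteq> S" and "s \<in> S'"
  shows "extend_by_id S S' \<phi> s = \<phi> s"
  using assms by (auto simp: extend_by_id_def)

lemma state_reduction_extend_by_id:
  assumes "S' \<subseteq> S" and "is_machine S' \<Phi>'"
  shows "state_reduction S (extend_by_id S S' ` \<Phi>') S' \<Phi>'"
  unfolding state_reduction_def
proof (intro conjI ballI impI)
  fix \<phi>' assume "\<phi>' \<in> \<Phi>'"
  then show "\<exists>\<phi>\<in>extend_by_id S S' ` \<Phi>'. \<forall>s\<in>S'. \<phi>' s = \<phi> s"
    using assms(1) by (auto simp: extend_by_id_agrees)
next
  fix \<phi> assume "\<phi> \<in> extend_by_id S S' ` \<Phi>'"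
  then show "\<exists>\<phi>'\<in>\<Phi>'. \<forall>s\<in>S'. \<phi>' s = \<phi> s"
    using assms(1) by (auto simp: extend_by_id_agrees)
qed (use assms in auto)

lemma sub_machine_full_transitions:
  assumes "S' \<subseteq> S" and "is_machine S' \<Phi>'"
  shows "sub_machine S (full_transitions S) S' \<Phi>'"
proof -
  have "functional_reduction (full_transitions S) (extend_by_id S S' ` \<Phi>')"
    using assms extend_by_id_in_full_transitions
    by (fastforce simp: functional_reduction_def is_machine_def)
  then show ?thesis
    using state_reduction_extend_by_id[OF assms] by (auto simp: sub_machine_def)
qed

definition pull_transition :: "('a \<Rightarrow> 'b) \<Rightarrow> 'a set \<Rightarrow> ('b \<Rightarrow> 'b) \<Rightarrow> 'a \<Rightarrow> 'a" where
  "pull_transition g S \<psi> = restrict (\<lambda>s. inv_into S g (\<psi> (g s))) S"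

definition push_transition :: "('a \<Rightarrow> 'b) \<Rightarrow> 'a set \<Rightarrow> 'b set \<Rightarrow> ('a \<Rightarrow> 'a) \<Rightarrow> 'b \<Rightarrow> 'b" where
  "push_transition g S T \<phi> = restrict (\<lambda>t. g (\<phi> (inv_into S g t))) T"

lemma push_pull_transition:
  assumes g: "bij_betw g S T" and \<psi>: "\<psi> \<in> full_transitions T"
  shows "push_transition g S T (pull_transition g S \<psi>) = \<psi>"
proof
  fix t
  show "push_transition g S T (pull_transition g S \<psi>) t = \<psi> t"
    using \<psi> bij_betw_inv_into_left[OF g] bij_betw_inv_into_right[OF g]
      bij_betw_imp_surj_on[OF g]
    by (cases "t \<in> T")
       (auto simp: push_transition_def pull_transition_def full_transitions_def
          inv_into_into PiE_def extensional_def Pi_iff)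
qed

lemma is_machine_pull_transition:
  assumes g: "bij_betw g S T" and "is_machine T \<Phi>"
  shows "is_machine S (pull_transition g S ` \<Phi>)"
  using assms bij_betw_apply[OF g] bij_betw_imp_surj_on[OF g]
  by (fastforce simp: is_machine_def full_transitions_def pull_transition_def PiE_iff
      intro: inv_into_into)

lemma machine_iso_pull_transition:
  assumes g: "bij_betw g S T" and \<Phi>: "is_machine T \<Phi>"
  shows "machine_iso S (pull_transition g S ` \<Phi>) T \<Phi>"
  unfolding machine_iso_def
proof (intro exI conjI ballI)
  have push_pull: "push_transition g S T (pull_transition g S \<psi>) = \<psi>" if "\<psi> \<in> \<Phi>" for \<psi>
    using push_pull_transition[OF g] \<Phi> that by (auto simp: is_machine_def)
  show "bij_betw g S T" by (fact g)
  show "bij_betw (push_transition g S T) (pull_transition g S ` \<Phi>) \<Phi>"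
    by (rule bij_betw_byWitness[where f' = "pull_transition g S"]) (auto simp: push_pull)
  fix s \<phi> assume s: "s \<in> S" and "\<phi> \<in> pull_transition g S ` \<Phi>"
  then obtain \<psi> where \<psi>: "\<psi> \<in> \<Phi>" and \<phi>: "\<phi> = pull_transition g S \<psi>" by blast
  have "\<psi> (g s) \<in> T"
    using \<Phi> \<psi> s bij_betw_apply[OF g] by (auto simp: is_machine_def full_transitions_def)
  then have "g (\<phi> s) = \<psi> (g s)"
    using s \<phi> bij_betw_inv_into_right[OF g] by (simp add: pull_transition_def)
  then show "g (\<phi> s) = push_transition g S T \<phi> (g s)"
    using \<phi> \<psi> push_pull by simp
qed

theorem theorem9:
  fixes S :: "'a set" and T :: "'b set" and \<Phi>T :: "('b \<Rightarrow> 'b) set"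
  assumes card_le: "\<exists>f. inj_on f T \<and> f ` T \<subseteq> S"
    and machT: "is_machine T \<Phi>T"
  shows "machine_complete S (full_transitions S) T \<Phi>T"
proof -
  obtain f where "inj_on f T" and image_sub: "f ` T \<subseteq> S" using card_le by blast
  then have g: "bij_betw (inv_into T f) (f ` T) T"
    by (simp add: bij_betw_inv_into inj_on_imp_bij_betw)
  define \<Phi>' where "\<Phi>' = pull_transition (inv_into T f) (f ` T) ` \<Phi>T"
  have "sub_machine S (full_transitions S) (f ` T) \<Phi>'"
    using sub_machine_full_transitions[OF image_sub] is_machine_pull_transition[OF g machT]
    by (simp add: \<Phi>'_def)
  moreover have "machine_iso (f ` T) \<Phi>' T \<Phi>T"
    using machine_iso_pull_transition[OF g machT] by (simp add: \<Phi>'_def)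
  ultimately show ?thesis unfolding machine_complete_def by blast
qed

end
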